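(* Fix $K\ge 1$. There is a constant $C_K$ depending only on $K$ such that, for all integers $n\ge K$ and $N>1$, all $\epsilon\in(0,1)$ and all $\delta\in(0,1/2]$, the total number of pulls made by MedianElimination (described in the context) with parameters $K,\epsilon,\delta$ on any MAB-BP instance with $n$ arms and reward lists of length $N$ is at most $$C_K\,\frac{n\sqrt{N}}{\epsilon}\sqrt{\log\frac1\delta}\,,$$ i.e. the time complexity is $O\!\left(\frac{n\sqrt N}{\epsilon}\sqrt{\log(1/\delta)}\right)$.
   Context: Multi-Armed Bandit with Bounded Pulls (MAB-BP): there are $n$ arms $a_1,\dots,a_n$; arm $a_i$ has a reward list $R_i=(R_i^{(1)},\dots,R_i^{(N)})$ with $R_i^{(j)}\in[0,1]$, and true mean $p_i=\frac1N\sum_{j=1}^N R_i^{(j)}$. Each pull of arm $a_i$ returns a value drawn uniformly at random without replacement from the entries of $R_i$ not yet returned. Define for $u>0$ $$m(u)=\min\left\{\frac{u+1}{1+\frac{u}{N}},\ \frac{u+\frac{u}{N}}{1+\frac{u}{N}}\right\}.$$ Algorithm MedianElimination (input $K\ge1$, $\epsilon>0$, $\delta>0$, arm set $A$): set $S_1=A$, $\epsilon_1=\epsilon/4$, $\delta_1=\delta/2$, $l=1$, $t_0=0$. While $|S_l|>K$: set $$t_l=\left\lceil m\!\left(\frac{2}{\epsilon_l^2}\log\frac{2(|S_l|-K)}{\delta_l\left(\left\lfloor\frac{|S_l|-K}{2}\right\rfloor+1\right)}\right)\right\rceil;$$ pull every arm $a\in S_l$ an additional $t_l-t_{l-1}$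 times, and let $\hat p^l_a$ be the empirical mean of all $t_l$ rewards obtained from $a$ since the start; remove from $S_l$ the $\left\lceil\frac{|S_l|-K}{2}\right\rceil$ arms with the smallest values of $\hat p^l_a$ to obtain $S_{l+1}$; set $\epsilon_{l+1}=\frac34\epsilon_l$, $\delta_{l+1}=\frac12\delta_l$, $l\leftarrow l+1$. When the loop ends, return $S_l$. *)

theory Defs
  imports Complex_Main
begin

definition mfun :: "nat \<Rightarrow> real \<Rightarrow> real" where
  "mfun N u = min ((u + 1) / (1 + u / real N)) ((u + u / real N) / (1 + u / real N))"

text \<open>t_l for round index i (i = l - 1, 0-based), current set size s:
  eps_l = (eps/4) (3/4)^i, delta_l = (delta/2) (1/2)^i.
  floor((s-K)/2) = (s-K) div 2 for naturals.\<close>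
definition me_t :: "nat \<Rightarrow> real \<Rightarrow> real \<Rightarrow> nat \<Rightarrow> nat \<Rightarrow> nat \<Rightarrow> nat" where
  "me_t K eps del N s i =
     (let epsl = (eps / 4) * (3/4) ^ i;
          dell = (del / 2) * (1/2) ^ i
      in nat \<lceil>mfun N ((2 / epsl ^ 2) *
               ln (2 * real (s - K) / (dell * (real ((s - K) div 2) + 1))))\<rceil>)"

text \<open>Total number of pulls made by MedianElimination from round i (0-based) on,
  when the current arm set has size s and each surviving arm has already been
  pulled tprev times.\<close>
function me_pulls :: "nat \<Rightarrow> real \<Rightarrow> real \<Rightarrow> nat \<Rightarrow> nat \<Rightarrow> nat \<Rightarrow> nat \<Rightarrow> nat" where
  "me_pulls K eps del N s i tprev =
     (if s \<le> K then 0
      else (let t = me_t K eps del N s i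
            in s * (t - tprev) + me_pulls K eps del N (s - (s - K + 1) div 2) (Suc i) t))"
  by pat_completeness auto
termination
  by (relation "measure (\<lambda>(K, eps, del, N, s, i, tprev). s)") auto

definition median_elimination_pulls :: "nat \<Rightarrow> real \<Rightarrow> real \<Rightarrow> nat \<Rightarrow> nat \<Rightarrow> nat" where
  "median_elimination_pulls K eps del N n = me_pulls K eps del N n 0 0"

end

theory Submission
  imports Defs
begin

text \<open>Since \<open>m(u) \<le> min u N + 1 \<le> sqrt (N u) + 1\<close>, round \<open>l\<close> pulls each surviving arm
  \<open>t\<^sub>l = O(sqrt N (4/3)\<^sup>l sqrt (l log (1/\<delta>)) / \<epsilon>) = O(sqrt N (3/2)\<^sup>l sqrt (log (1/\<delta>)) / \<epsilon>)\<close>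
  times, while the number of arms in excess of \<open>K\<close> at least halves from one round to the next.
  Hence the cost of round \<open>l\<close> decays geometrically with ratio \<open>3/4\<close> and the total is
  dominated by the first round.\<close>

lemma mfun_le_sqrt:
  assumes N: "1 \<le> real N" and u: "0 \<le> u"
  shows "mfun N u \<le> sqrt (real N * u) + 1"
proof -
  have "mfun N u \<le> (u + 1) / (1 + u / real N)" unfolding mfun_def by simp
  also have "\<dots> = real N * (u + 1) / (real N + u)" using N by (simp add: field_simps)
  also have "\<dots> \<le> min u (real N) + 1"
  proof -
    have "0 \<le> u * u" "0 \<le> real N * real N" by simp_all
    then have "real N * (u + 1) \<le> (min u (real N) + 1) * (real N + u)"
      using u by (auto simp: min_def algebra_simps)
    then show ?thesis using N u by (simp add: divide_le_eq)
  qed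
  also have "min u (real N) \<le> sqrt (real N * u)"
    using N u by (intro real_le_rsqrt) (simp add: power2_eq_square min_def mult_mono)
  finally show ?thesis by simp
qed

lemma halving_ratio_bounds:
  assumes "1 \<le> a"
  shows "2 \<le> 2 * real a / (real (a div 2) + 1)" "2 * real a / (real (a div 2) + 1) \<le> 4"
proof -
  have "a div 2 + 1 \<le> a" "a \<le> 2 * (a div 2 + 1)" using assms by presburger+
  then have "real (a div 2 + 1) \<le> real a" "real a \<le> real (2 * (a div 2 + 1))"
    by (simp_all only: of_nat_le_iff)
  then show "2 \<le> 2 * real a / (real (a div 2) + 1)" "2 * real a / (real (a div 2) + 1) \<le> 4"
    by (simp_all add: field_simps)
qed

lemma ln_inverse_ge_ln2:
  fixes del :: real
  assumes "0 < del" "del \<le> 1/2" shows "ln 2 \<le> ln (1/del)"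
  using assms by (simp add: le_divide_eq)

lemma ln_inverse_ge_half:
  fixes del :: real
  assumes "0 < del" "del \<le> 1/2" shows "1/2 \<le> ln (1/del)"
  using ln_inverse_ge_ln2[OF assms] ln_le_minus_one[of "1/2::real"] by (simp add: ln_div)

lemma linear_le_exponential: "4 + real i \<le> 4 * (81/64) ^ i"
proof (induction i)
  case (Suc i)
  have "1 \<le> (81/64::real) ^ i" by simp
  with Suc show ?case by simp
qed simp

lemma me_log_argument_bounds:
  fixes del :: real and i :: nat
  assumes "K < s" "0 < del" "del \<le> 1/2"
  defines "arg \<equiv> 2 * real (s - K) / (del / 2 * (1/2) ^ i * (real ((s - K) div 2) + 1))"
  shows "1 \<le> arg" "ln arg \<le> (4 + real i) * ln (1/del)"
proof -
  define r where "r = 2 * real (s - K) / (real ((s - K) div 2) + 1)"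
  have r: "2 \<le> r" "r \<le> 4" unfolding r_def using halving_ratio_bounds[of "s - K"] assms(1) by auto
  have arg: "arg = r * 2 * 2 ^ i / del"
    unfolding arg_def r_def using assms(2) by (simp add: field_simps)
  have "del \<le> 2 * 2 ^ i" using assms(3) one_le_power[of "2::real" i] by linarith
  then have "1 * 1 \<le> r * (2 * 2 ^ i / del)"
    using r assms(2) by (intro mult_mono) (auto simp: le_divide_eq)
  then show arg_ge: "1 \<le> arg" unfolding arg by simp
  have "arg \<le> 8 * 2 ^ i / del"
    unfolding arg using r assms(2) by (simp add: divide_right_mono)
  then have "ln arg \<le> ln (2 ^ 3 * 2 ^ i / del)" using arg_ge by simp
  also have "\<dots> = (3 + real i) * ln 2 + ln (1/del)"
    using assms(2) ln_realpow[of "2::real" 3] by (simp add: ln_mult ln_div ln_realpow algebra_simps)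
  also have "\<dots> \<le> (4 + real i) * ln (1/del)"
    using mult_left_mono[OF ln_inverse_ge_ln2[OF assms(2,3)], of "3 + real i"]
    by (simp add: algebra_simps)
  finally show "ln arg \<le> (4 + real i) * ln (1/del)" .
qed

lemma me_exponent_bounds:
  fixes eps del :: real and i :: nat
  assumes "K < s" "0 < eps" "0 < del" "del \<le> 1/2"
  defines "u \<equiv> (2 / (eps / 4 * (3/4) ^ i) ^ 2) *
             ln (2 * real (s - K) / (del / 2 * (1/2) ^ i * (real ((s - K) div 2) + 1)))"
  shows "0 \<le> u" "u \<le> 128 * ln (1/del) * (9/4) ^ i / eps ^ 2"
proof -
  note arg = me_log_argument_bounds[OF assms(1,3,4), of i]
  have "(eps / 4 * (3/4) ^ i) ^ 2 = eps ^ 2 / 16 * ((3/4) ^ i * (3/4) ^ i)"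
    by (simp add: power2_eq_square)
  also have "(3/4::real) ^ i * (3/4) ^ i = 1 / (16/9) ^ i"
    by (simp flip: power_mult_distrib power_one_over)
  finally have coeff: "2 / (eps / 4 * (3/4) ^ i) ^ 2 = 32 * (16/9) ^ i / eps ^ 2"
    by simp
  show "0 \<le> u" unfolding u_def by (rule mult_nonneg_nonneg[OF _ ln_ge_zero[OF arg(1)]]) simp
  have ln_nonneg: "0 \<le> ln (1/del)" using ln_inverse_ge_half[OF assms(3,4)] by linarith
  have "u \<le> 32 * (16/9) ^ i / eps ^ 2 * ((4 + real i) * ln (1/del))"
    unfolding u_def coeff using arg(2) by (intro mult_left_mono) auto
  also have "\<dots> \<le> 32 * (16/9) ^ i / eps ^ 2 * (4 * (81/64) ^ i * ln (1/del))"
    using linear_le_exponential[of i] ln_nonneg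
    by (intro mult_left_mono mult_right_mono) auto
  also have "\<dots> = 128 * ln (1/del) * ((16/9) ^ i * (81/64) ^ i) / eps ^ 2" by simp
  also have "(16/9::real) ^ i * (81/64) ^ i = (9/4) ^ i" by (simp flip: power_mult_distrib)
  finally show "u \<le> 128 * ln (1/del) * (9/4) ^ i / eps ^ 2" by simp
qed

lemma me_t_le:
  assumes "K < s" "0 < eps" "0 < del" "del \<le> 1/2" and N: "1 \<le> real N"
  shows "real (me_t K eps del N s i) \<le> sqrt (128 * real N * ln (1/del)) / eps * (3/2) ^ i + 2"
proof -
  define L where "L = ln (1/del)"
  define u where "u = (2 / (eps / 4 * (3/4) ^ i) ^ 2) *
    ln (2 * real (s - K) / (del / 2 * (1/2) ^ i * (real ((s - K) div 2) + 1)))"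
  note u = me_exponent_bounds[OF assms(1-4), of i, folded u_def L_def]
  have square: "(9/4::real) ^ i = ((3/2) ^ i) ^ 2"
    by (simp add: power2_eq_square flip: power_mult_distrib)
  have "real (me_t K eps del N s i) \<le> mfun N u + 1 \<or> me_t K eps del N s i = 0"
    unfolding me_t_def u_def Let_def by linarith
  moreover have "mfun N u \<le> sqrt (real N * u) + 1" using mfun_le_sqrt[OF N u(1)] .
  moreover have "sqrt (real N * u) \<le> sqrt (real N * (128 * L * (9/4) ^ i / eps ^ 2))"
    using u(2) N by (intro real_sqrt_le_mono mult_left_mono) simp_all
  moreover have "\<dots> = sqrt (128 * real N * L) / eps * (3/2) ^ i"
    unfolding square using assms(2) by (simp add: real_sqrt_mult real_sqrt_divide)
  moreover have "0 \<le> sqrt (128 * real N * L) / eps * (3/2) ^ i"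
    using assms(2) ln_inverse_ge_half[OF assms(3,4)] N unfolding L_def by simp
  ultimately show ?thesis unfolding L_def by linarith
qed

lemma excess_halves: "K < (s::nat) \<Longrightarrow> 2 * (s - (s - K + 1) div 2 - K) \<le> s - K"
  by presburger

lemma le_Suc_mult_excess: "K < (s::nat) \<Longrightarrow> s \<le> (K + 1) * (s - K)"
proof -
  assume "K < s"
  then have "1 \<le> s - K" by simp
  then have "K * 1 \<le> K * (s - K)" by (rule mult_le_mono2)
  moreover have "(K + 1) * (s - K) = K * (s - K) + (s - K)" by simp
  ultimately show ?thesis using \<open>K < s\<close> by linarith
qed

declare me_pulls.simps [simp del]

lemma me_pulls_le:
  assumes "0 < eps" "0 < del" "del \<le> 1/2" "1 \<le> real N"
  shows "real (me_pulls K eps del N s i tprev)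
    \<le> real (K + 1) * real (s - K) * (4 * (sqrt (128 * real N * ln (1/del)) / eps) * (3/2) ^ i + 4)"
  using assms
proof (induction K eps del N s i tprev rule: me_pulls.induct)
  case (1 K eps del N s i tprev)
  define B where "B = sqrt (128 * real N * ln (1/del)) / eps"
  define x where "x = (3/2::real) ^ i"
  have B: "0 \<le> B" unfolding B_def using "1.prems" ln_inverse_ge_half[of del] by simp
  have x: "0 \<le> x" unfolding x_def by simp
  show ?case
  proof (cases "s \<le> K")
    case True
    then show ?thesis by (simp add: me_pulls.simps)
  next
    case False
    define t where "t = me_t K eps del N s i"
    define s' where "s' = s - (s - K + 1) div 2"
    have split: "me_pulls K eps del N s i tprev = s * (t - tprev) + me_pulls K eps del N s' (Suc i) t"
      using False unfolding t_def s'_def by (subst me_pulls.simps) (simp add: Let_def)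
    have "s * (t - tprev) \<le> (K + 1) * (s - K) * t"
      using le_Suc_mult_excess[of K s] False by (intro mult_mono) auto
    then have "real (s * (t - tprev)) \<le> real (K + 1) * real (s - K) * real t"
      by (metis of_nat_le_iff of_nat_mult)
    also have "\<dots> \<le> real (K + 1) * real (s - K) * (B * x + 2)"
      using me_t_le[of K s eps del N i] False "1.prems" unfolding t_def B_def x_def
      by (simp add: mult_left_mono)
    finally have round: "real (s * (t - tprev)) \<le> real (K + 1) * real (s - K) * (B * x + 2)" .
    have "real (me_pulls K eps del N s' (Suc i) t)
        \<le> real (K + 1) * real (s' - K) * (4 * B * (3/2) ^ Suc i + 4)"
      using "1.IH"[OF False t_def "1.prems"] unfolding B_def s'_def by simp
    also have "\<dots> = real (K + 1) * (2 * real (s' - K)) * (3 * B * x + 2)"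
      unfolding x_def by (simp add: algebra_simps)
    also have "\<dots> \<le> real (K + 1) * real (s - K) * (3 * B * x + 2)"
      using excess_halves[of K s] False B x unfolding s'_def
      by (intro mult_right_mono mult_left_mono) (simp_all flip: of_nat_mult)
    finally have rest: "real (me_pulls K eps del N s' (Suc i) t)
        \<le> real (K + 1) * real (s - K) * (3 * B * x + 2)" .
    show ?thesis
      unfolding split B_def[symmetric] x_def[symmetric] using round rest by (simp add: algebra_simps)
  qed
qed

theorem corollary3:
  fixes K :: nat
  assumes "K \<ge> 1"
  shows "\<exists>C :: real. \<forall>(n::nat) (N::nat) (eps::real) (del::real).
           n \<ge> K \<longrightarrow> N > 1 \<longrightarrow> 0 < eps \<longrightarrow> eps < 1 \<longrightarrow> 0 < del \<longrightarrow> del \<le> 1/2 \<longrightarrow>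
           real (median_elimination_pulls K eps del N n)
             \<le> C * real n * sqrt (real N) / eps * sqrt (ln (1 / del))"
proof (intro exI[of _ "real (K + 1) * (4 * sqrt 128 + 8)"] allI impI)
  fix n N :: nat and eps del :: real
  assume "n \<ge> K" "N > 1" "0 < eps" "eps < 1" "0 < del" "del \<le> 1/2"
  define Q where "Q = sqrt (real N) / eps * sqrt (ln (1/del))"
  have "1 \<le> sqrt (real N)" using \<open>N > 1\<close> by simp
  then have "eps \<le> sqrt (real N)" using \<open>eps < 1\<close> by linarith
  then have "1 \<le> sqrt (real N) / eps" using \<open>0 < eps\<close> by (simp add: le_divide_eq)
  moreover have "(1/2)\<^sup>2 \<le> ln (1/del)"
    using ln_inverse_ge_half[OF \<open>0 < del\<close> \<open>del \<le> 1/2\<close>] by (simp add: power2_eq_square)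
  then have "1/2 \<le> sqrt (ln (1/del))" by (rule real_le_rsqrt)
  ultimately have Q: "1 * (1/2) \<le> Q" unfolding Q_def by (intro mult_mono) auto
  have "real (median_elimination_pulls K eps del N n)
      \<le> real (K + 1) * real (n - K) * (4 * (sqrt 128 * Q) + 4)"
    using me_pulls_le[of eps del N K n 0 0] \<open>N > 1\<close> \<open>0 < eps\<close> \<open>0 < del\<close> \<open>del \<le> 1/2\<close>
    unfolding median_elimination_pulls_def Q_def by (simp add: real_sqrt_mult mult.assoc)
  also have "\<dots> \<le> real (K + 1) * real n * (4 * sqrt 128 * Q + 8 * Q)"
    using Q by (intro mult_mono) auto
  also have "\<dots> = real (K + 1) * (4 * sqrt 128 + 8) * real n * sqrt (real N) / eps * sqrt (ln (1 / del))"
    unfolding Q_def by (simp add: algebra_simps add_divide_distrib)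
  finally show "real (median_elimination_pulls K eps del N n)
      \<le> real (K + 1) * (4 * sqrt 128 + 8) * real n * sqrt (real N) / eps * sqrt (ln (1 / del))" .
qed

end
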